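(* Let $\mathcal{G}$ be a quantitative concurrent graph game with initial state $v_0$ and let $\vec c\in\mathsf{NE}_{\mathsf{PO}}(v_0)$. Then $\vec c$ is attained by a Nash equilibrium profile $P$ in $\mathcal{G}$ with a set of winners $W$ such that $\mathsf{outcome}(P)=\mu\cdot\eta^\omega$, where $\mu$ is a path of length at most $|\Omega|\cdot|V|$ that visits $F_\alpha$ for all $\alpha\in W$, and $\eta$ is a simple cycle.
   Context: A quantitative concurrent graph game is a tuple $\mathcal{G}=\langle \Omega, V, \{\mathsf{Act}_\alpha\}_{\alpha\in\Omega}, v_0, \delta, \mathsf{cost}, F\rangle$: finite players $\Omega$, finite states $V$, finite action sets (all enabled everywhere), initial state $v_0$, transition function $\delta: V\times\prod_\alpha\mathsf{Act}_\alpha\to V$, cost function giving each transition a vector in $\mathbb{N}^\Omega$, and target sets $F_\alpha\subseteq V$. $\mathsf{cost}_\alpha$ of an outcome (sequence of consecutive transitions from the initial state) is the $\alpha$-cost accumulated until $F_\alpha$ is first visited, $\infty$ if never. Strategies map histories to actions; a profile $P$ induces an outcome and cost vector $\mathsf{cost}(P)$. $P$ is a Nash equilibrium (NE) if no player can strictly decrease its own cost by unilaterally changing its strategy. An NE cost vector $\vec c$ is Pareto-optimal if no NE cost vector $\vec d\neq\vec c$ satisfies $\vec d\le\vec c$ componentwise; $\mathsf{NE}_{\mathsf{PO}}(v_0)$ is the set of Pareto-optimal NE cost vectors from $v_0$. The set of winners of a profile is the set of players whose target set is visited along its outcome. The length of a path is its number of transitions. *)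

theory Defs
  imports Main "HOL-Library.Extended_Nat"
begin

text \<open>Players are the elements of a finite type 'p
  (the set Omega), states are the elements of a finite type 'v (the set V).\<close>

record ('p, 'v, 'a) cgame =
  acts   :: "'p \<Rightarrow> 'a set"
  trans  :: "'v \<Rightarrow> ('p \<Rightarrow> 'a) \<Rightarrow> 'v"
  tcost  :: "'v \<Rightarrow> 'v \<Rightarrow> 'p \<Rightarrow> nat"
  target :: "'p \<Rightarrow> 'v set"
  init   :: 'v

definition wf_game :: "('p::finite, 'v::finite, 'a) cgame \<Rightarrow> bool" where
  "wf_game G \<longleftrightarrow> (\<forall>\<alpha>. finite (acts G \<alpha>) \<and> acts G \<alpha> \<noteq> {})"

type_synonym ('v, 'a) strategy = "'v list \<Rightarrow> 'a"
type_synonym ('p, 'v, 'a) profile = "'p \<Rightarrow> ('v, 'a) strategy"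

definition valid_strategy :: "('p, 'v, 'a) cgame \<Rightarrow> 'p \<Rightarrow> ('v, 'a) strategy \<Rightarrow> bool" where
  "valid_strategy G \<alpha> \<sigma> \<longleftrightarrow> (\<forall>h. \<sigma> h \<in> acts G \<alpha>)"

definition valid_profile :: "('p, 'v, 'a) cgame \<Rightarrow> ('p, 'v, 'a) profile \<Rightarrow> bool" where
  "valid_profile G P \<longleftrightarrow> (\<forall>\<alpha>. valid_strategy G \<alpha> (P \<alpha>))"

text \<open>History of length n (n transitions) induced by a profile from the initial state.\<close>
fun hist :: "('p, 'v, 'a) cgame \<Rightarrow> ('p, 'v, 'a) profile \<Rightarrow> nat \<Rightarrow> 'v list" where
  "hist G P 0 = [init G]"
| "hist G P (Suc n) = hist G P n @ [trans G (last (hist G P n)) (\<lambda>\<alpha>. P \<alpha> (hist G P n))]"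

definition outcome :: "('p, 'v, 'a) cgame \<Rightarrow> ('p, 'v, 'a) profile \<Rightarrow> nat \<Rightarrow> 'v" where
  "outcome G P n = last (hist G P n)"

definition play_cost :: "('p, 'v, 'a) cgame \<Rightarrow> (nat \<Rightarrow> 'v) \<Rightarrow> 'p \<Rightarrow> enat" where
  "play_cost G \<rho> \<alpha> =
     (if \<exists>n. \<rho> n \<in> target G \<alpha>
      then enat (\<Sum>i < (LEAST n. \<rho> n \<in> target G \<alpha>). tcost G (\<rho> i) (\<rho> (Suc i)) \<alpha>)
      else \<infinity>)"

definition cost :: "('p, 'v, 'a) cgame \<Rightarrow> ('p, 'v, 'a) profile \<Rightarrow> 'p \<Rightarrow> enat" where
  "cost G P = play_cost G (outcome G P)"

definition is_NE :: "('p, 'v, 'a) cgame \<Rightarrow> ('p, 'v, 'a) profile \<Rightarrow> bool" where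
  "is_NE G P \<longleftrightarrow> valid_profile G P \<and>
     (\<forall>\<alpha> \<sigma>. valid_strategy G \<alpha> \<sigma> \<longrightarrow> cost G P \<alpha> \<le> cost G (P(\<alpha> := \<sigma>)) \<alpha>)"

definition NE_costs :: "('p, 'v, 'a) cgame \<Rightarrow> ('p \<Rightarrow> enat) set" where
  "NE_costs G = {cost G P | P. is_NE G P}"

definition NE_PO :: "('p, 'v, 'a) cgame \<Rightarrow> ('p \<Rightarrow> enat) set" where
  "NE_PO G = {c \<in> NE_costs G. \<forall>d \<in> NE_costs G. d \<le> c \<longrightarrow> d = c}"

definition winners :: "('p, 'v, 'a) cgame \<Rightarrow> ('p, 'v, 'a) profile \<Rightarrow> 'p set" where
  "winners G P = {\<alpha>. \<exists>n. outcome G P n \<in> target G \<alpha>}"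

text \<open>A play equals mu . eta^omega: mu = [u_0,...,u_k] is a finite path (k transitions) and
  eta = [w_0,...,w_{m-1}] with w_0 = u_k is a simple cycle w_0 ... w_{m-1} w_0 (distinct states),
  so the play is u_0 ... u_k w_1 ... w_{m-1} w_0 w_1 ...\<close>
definition lasso :: "(nat \<Rightarrow> 'v) \<Rightarrow> 'v list \<Rightarrow> 'v list \<Rightarrow> bool" where
  "lasso \<rho> \<mu> \<eta> \<longleftrightarrow> \<mu> \<noteq> [] \<and> \<eta> \<noteq> [] \<and> distinct \<eta> \<and> hd \<eta> = last \<mu> \<and>
     (\<forall>i < length \<mu>. \<rho> i = \<mu> ! i) \<and>
     (\<forall>j. \<rho> (length \<mu> - 1 + j) = \<eta> ! (j mod length \<eta>))"

end

theory Submission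
  imports Defs "HOL-Library.Sublist"
begin

text \<open>Let \<open>P\<close> be an equilibrium with outcome \<open>\<rho>\<close> whose cost vector \<open>c\<close> is Pareto-optimal.
  The shortcut of \<open>\<rho>\<close> takes edges of \<open>\<rho>\<close> only, but before each step it jumps forward to the
  last occurrence in \<open>\<rho>\<close> of its current state that does not pass the first visit of \<open>\<rho>\<close> to a
  target it has not yet reached (once every such target is reached: the last of these first
  visits). It thus skips cycles of \<open>\<rho>\<close> only, uses the edges of \<open>\<rho>\<close> at strictly increasing
  positions while some target is pending, and every player whose target is still ahead faces
  at most the remaining cost it faces along \<open>\<rho>\<close>. A deviation from the shortcut is replayed as
  a deviation from \<open>\<rho>\<close>, which \<open>P\<close> punishes; so the shortcut is the outcome of an equilibrium
  of cost at most \<open>c\<close>, hence exactly \<open>c\<close>. Once the set of reached targets is the final one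
  before the last new visit, the next state depends on the current state only and the play
  is a lasso. Between two visits to new targets the states of the shortcut are distinct, which
  bounds the prefix of the lasso by \<open>|\<Omega>| \<cdot> |V|\<close>.\<close>

section \<open>Outcomes and accumulated costs\<close>

lemma hist_eq_map_outcome: "hist G P n = map (outcome G P) [0..<Suc n]"
proof (induction n)
  case (Suc n)
  have "hist G P (Suc n) = hist G P n @ [outcome G P (Suc n)]"
    by (simp add: outcome_def)
  then show ?case
    using Suc by simp
qed (simp add: outcome_def)

lemma outcome_0: "outcome G P 0 = init G"
  by (simp add: outcome_def)

lemma outcome_Suc:
  "outcome G P (Suc n) = trans G (outcome G P n) (\<lambda>\<beta>. P \<beta> (map (outcome G P) [0..<Suc n]))"
proof -
  have "outcome G P (Suc n) = trans G (outcome G P n) (\<lambda>\<beta>. P \<beta> (hist G P n))"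
    by (simp add: outcome_def)
  then show ?thesis
    by (simp only: hist_eq_map_outcome)
qed

lemma outcome_eqI:
  assumes "\<rho> 0 = init G"
    and "\<And>n. \<rho> (Suc n) = trans G (\<rho> n) (\<lambda>\<beta>. P \<beta> (map \<rho> [0..<Suc n]))"
  shows "outcome G P = \<rho>"
proof -
  have "\<forall>k\<le>n. outcome G P k = \<rho> k" for n
  proof (induction n)
    case 0
    then show ?case by (simp add: outcome_0 assms(1))
  next
    case (Suc n)
    then have "map (outcome G P) [0..<Suc n] = map \<rho> [0..<Suc n]" "outcome G P n = \<rho> n"
      by auto
    then have "outcome G P (Suc n) = \<rho> (Suc n)"
      by (simp only: outcome_Suc assms(2))
    then show ?case
      using Suc by (auto simp: le_Suc_eq)
  qed
  then show ?thesis
    by auto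
qed

lemma map_upt_Suc_add: "map r [0..<Suc (m + j)] = map r [0..<Suc m] @ map (\<lambda>i. r (Suc m + i)) [0..<j]"
proof -
  have "[0..<Suc m + j] = [0..<Suc m] @ [Suc m..<Suc m + j]"
    by (rule upt_add_eq_append) simp
  moreover have "map r [Suc m..<Suc m + j] = map (\<lambda>i. r (Suc m + i)) [0..<j]"
    by (rule map_upt_eqI) auto
  ultimately show ?thesis
    by simp
qed

lemma first_divergence:
  fixes \<rho> :: "nat \<Rightarrow> 'v"
  assumes "\<rho> 0 = \<rho>' 0" and "\<rho> \<noteq> \<rho>'"
  obtains n where "\<forall>k\<le>n. \<rho> k = \<rho>' k" and "\<rho> (Suc n) \<noteq> \<rho>' (Suc n)"
proof -
  obtain m where "\<rho> m \<noteq> \<rho>' m"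
    using assms(2) by blast
  with assms(1) obtain m' where "\<rho> (Suc m') \<noteq> \<rho>' (Suc m')"
    by (cases m) auto
  then have ex: "\<exists>n. \<rho> (Suc n) \<noteq> \<rho>' (Suc n)" ..
  define n where "n = (LEAST n. \<rho> (Suc n) \<noteq> \<rho>' (Suc n))"
  have "\<rho> (Suc n) \<noteq> \<rho>' (Suc n)"
    unfolding n_def using ex by (rule LeastI_ex)
  moreover have "\<rho> k = \<rho>' k" if "k \<le> n" for k
  proof (cases k)
    case (Suc k')
    then have "k' < n"
      using that by simp
    then show ?thesis
      unfolding Suc n_def by (rule not_less_Least[THEN notnotD])
  qed (simp add: assms(1))
  ultimately show thesis
    using that by blast
qed

definition path_cost :: "('p, 'v, 'a) cgame \<Rightarrow> (nat \<Rightarrow> 'v) \<Rightarrow> nat \<Rightarrow> 'p \<Rightarrow> nat" where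
  "path_cost G \<rho> n \<alpha> = (\<Sum>i<n. tcost G (\<rho> i) (\<rho> (Suc i)) \<alpha>)"

lemma path_cost_0 [simp]: "path_cost G \<rho> 0 \<alpha> = 0"
  by (simp add: path_cost_def)

lemma path_cost_cong: "(\<And>k. k \<le> n \<Longrightarrow> \<rho> k = \<rho>' k) \<Longrightarrow> path_cost G \<rho> n \<alpha> = path_cost G \<rho>' n \<alpha>"
  unfolding path_cost_def by (intro sum.cong) auto

lemma path_cost_add:
  "path_cost G \<rho> (m + d) \<alpha> = path_cost G \<rho> m \<alpha> + path_cost G (\<lambda>j. \<rho> (m + j)) d \<alpha>"
  by (induction d) (simp_all add: path_cost_def)

lemma play_cost_first_visit:
  assumes "\<rho> t \<in> target G \<alpha>" and "\<And>k. k < t \<Longrightarrow> \<rho> k \<notin> target G \<alpha>"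
  shows "play_cost G \<rho> \<alpha> = enat (path_cost G \<rho> t \<alpha>)"
proof -
  have "(LEAST n. \<rho> n \<in> target G \<alpha>) = t"
    using assms by (intro Least_equality) (auto simp: not_less[symmetric])
  then show ?thesis
    using assms(1) by (auto simp: play_cost_def path_cost_def)
qed

lemma play_cost_unreached: "(\<And>k. \<rho> k \<notin> target G \<alpha>) \<Longrightarrow> play_cost G \<rho> \<alpha> = \<infinity>"
  by (simp add: play_cost_def)

lemma obtain_first_visit:
  fixes \<rho> :: "nat \<Rightarrow> 'v"
  assumes "\<rho> n \<in> target G \<alpha>"
  obtains t where "t \<le> n" "\<rho> t \<in> target G \<alpha>" "\<And>k. k < t \<Longrightarrow> \<rho> k \<notin> target G \<alpha>"
proof
  let ?visit = "\<lambda>t. \<rho> t \<in> target G \<alpha>"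
  show "Least ?visit \<le> n" "?visit (Least ?visit)"
    using Least_le[of ?visit] LeastI[of ?visit] assms by auto
qed (rule not_less_Least)

lemma play_cost_cong:
  fixes \<rho> :: "nat \<Rightarrow> 'v"
  assumes "\<And>k. k \<le> n \<Longrightarrow> \<rho> k = \<rho>' k" and "\<rho> n' \<in> target G \<alpha>" and "n' \<le> n"
  shows "play_cost G \<rho> \<alpha> = play_cost G \<rho>' \<alpha>"
proof -
  obtain t where t: "t \<le> n'" "\<rho> t \<in> target G \<alpha>" "\<And>k. k < t \<Longrightarrow> \<rho> k \<notin> target G \<alpha>"
    using assms(2) by (rule obtain_first_visit) blast+
  have "play_cost G \<rho> \<alpha> = enat (path_cost G \<rho> t \<alpha>)"
    using t(2,3) by (rule play_cost_first_visit)
  also have "\<dots> = enat (path_cost G \<rho>' t \<alpha>)"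
    using t assms by (auto intro!: path_cost_cong)
  also have "\<dots> = play_cost G \<rho>' \<alpha>"
    using t assms by (intro play_cost_first_visit[symmetric]) auto
  finally show ?thesis .
qed

lemma play_cost_split:
  assumes "\<And>k. k \<le> m \<Longrightarrow> \<rho> k \<notin> target G \<alpha>"
  shows "play_cost G \<rho> \<alpha> = enat (path_cost G \<rho> m \<alpha>) + play_cost G (\<lambda>j. \<rho> (m + j)) \<alpha>"
proof (cases "\<exists>n. \<rho> n \<in> target G \<alpha>")
  case True
  then obtain n where "\<rho> n \<in> target G \<alpha>" ..
  then obtain t where t: "\<rho> t \<in> target G \<alpha>" "\<And>k. k < t \<Longrightarrow> \<rho> k \<notin> target G \<alpha>"
    by (rule obtain_first_visit) blast+
  have "m < t"
    using assms[of t] t(1) by (cases "m < t") auto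
  then obtain d where d: "t = m + d"
    using less_imp_add_positive by blast
  have "play_cost G (\<lambda>j. \<rho> (m + j)) \<alpha> = enat (path_cost G (\<lambda>j. \<rho> (m + j)) d \<alpha>)"
    using t unfolding d by (intro play_cost_first_visit) auto
  moreover have "play_cost G \<rho> \<alpha> = enat (path_cost G \<rho> t \<alpha>)"
    using t by (rule play_cost_first_visit)
  ultimately show ?thesis
    unfolding d path_cost_add by simp
next
  case False
  then show ?thesis
    by (simp add: play_cost_unreached)
qed

lemma sum_inj_le:
  fixes f :: "nat \<Rightarrow> nat"
  assumes "inj_on p {..<d}" and "\<And>i. i < d \<Longrightarrow> p i < e"
  shows "(\<Sum>i<d. f (p i)) \<le> (\<Sum>j<e. f j)"
proof -
  have "(\<Sum>i<d. f (p i)) = sum f (p ` {..<d})"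
    using assms(1) by (simp add: sum.reindex)
  also have "\<dots> \<le> sum f {..<e}"
    using assms(2) by (intro sum_mono2) auto
  finally show ?thesis .
qed

section \<open>Lassos of eventually deterministic plays\<close>

lemma lasso_prepend:
  assumes "lasso (\<lambda>j. \<rho> (m + j)) \<mu> \<eta>"
  shows "lasso \<rho> (map \<rho> [0..<m] @ \<mu>) \<eta>"
  unfolding lasso_def
proof (intro conjI allI impI)
  have \<mu>: "\<mu> \<noteq> []" and prefix: "\<forall>i<length \<mu>. \<rho> (m + i) = \<mu> ! i"
    and cycle: "\<forall>j. \<rho> (m + (length \<mu> - 1 + j)) = \<eta> ! (j mod length \<eta>)"
    using assms unfolding lasso_def by (simp_all add: add.assoc)
  show "map \<rho> [0..<m] @ \<mu> \<noteq> []" "\<eta> \<noteq> []" "distinct \<eta>" "hd \<eta> = last (map \<rho> [0..<m] @ \<mu>)"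
    using assms \<mu> unfolding lasso_def by simp_all
  show "\<rho> i = (map \<rho> [0..<m] @ \<mu>) ! i" if "i < length (map \<rho> [0..<m] @ \<mu>)" for i
    using that prefix[rule_format, of "i - m"] by (cases "i < m") (simp_all add: nth_append)
  show "\<rho> (length (map \<rho> [0..<m] @ \<mu>) - 1 + j) = \<eta> ! (j mod length \<eta>)" for j
  proof -
    have "length (map \<rho> [0..<m] @ \<mu>) - 1 + j = m + (length \<mu> - 1 + j)"
      using \<mu> by (cases \<mu>) auto
    then show ?thesis
      using cycle by (simp only:)
  qed
qed

lemma lasso_prefix_mem: "lasso \<rho> \<mu> \<eta> \<Longrightarrow> k < length \<mu> \<Longrightarrow> \<rho> k \<in> set \<mu>"
  unfolding lasso_def by auto

lemma obtain_first_repeat: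
  fixes s :: "nat \<Rightarrow> 'v::finite"
  obtains a p where "0 < p" and "s (a + p) = s a" and "inj_on s {..<a + p}"
proof -
  let ?repeats = "\<lambda>b. \<exists>a<b. s a = s b"
  have "\<not> inj s"
    using finite_imageD[of s UNIV] infinite_UNIV_nat by auto
  then have "\<exists>b. ?repeats b"
    unfolding inj_def by (metis linorder_neqE_nat)
  then have "?repeats (Least ?repeats)"
    by (rule LeastI_ex)
  then obtain a where "a < Least ?repeats" and "s a = s (Least ?repeats)"
    by blast
  moreover have "inj_on s {..<Least ?repeats}"
  proof (rule linorder_inj_onI')
    fix x y
    assume "x \<in> {..<Least ?repeats}" "y \<in> {..<Least ?repeats}" "x < y"
    then show "s x \<noteq> s y"
      using not_less_Least[of y ?repeats] by auto
  qed
  ultimately show thesis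
    using that[of "Least ?repeats - a" a] by simp
qed

lemma iterate_periodic:
  assumes iter: "\<And>j. s (Suc j) = f (s j)" and repeat: "s (a + p) = s a" and "a \<le> j"
  shows "s (j + q * p) = s j"
proof -
  have period: "s (i + p) = s i" if "a \<le> i" for i
  proof -
    have "s (a + p + t) = s (a + t)" for t
      by (induction t) (simp_all add: iter repeat)
    then show ?thesis
      using that by (metis add.commute add.left_commute le_add_diff_inverse)
  qed
  show ?thesis
  proof (induction q)
    case (Suc q)
    have "s (j + Suc q * p) = s (j + q * p + p)"
      by (simp add: algebra_simps)
    also have "\<dots> = s j"
      using period[of "j + q * p"] \<open>a \<le> j\<close> Suc by simp
    finally show ?case .
  qed simp
qed

lemma iterate_window_distinct:
  assumes iter: "\<And>j. s (Suc j) = f (s j)" and repeat: "s (a + p) = s a"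
    and inj: "inj_on s {..<a + p}" and "0 < p" and "a \<le> i"
  shows "distinct (map s [i..<i + p])"
  using \<open>a \<le> i\<close>
proof (induction i rule: dec_induct)
  case base
  show ?case
    using inj by (simp add: distinct_map inj_on_subset[of s "{..<a + p}"] subset_eq)
next
  case (step i)
  have "s (i + p) = s i"
    using iterate_periodic[OF iter repeat step.hyps(1), of 1] by simp
  then have "map s [Suc i..<Suc i + p] = rotate1 (map s [i..<i + p])"
    using \<open>0 < p\<close> by (simp add: upt_conv_Cons)
  then show ?case
    using step.IH by simp
qed

lemma lasso_of_repeat:
  assumes iter: "\<And>j. s (Suc j) = f (s j)" and repeat: "s (a + p) = s a"
    and inj: "inj_on s {..<a + p}" and "0 < p"
  shows "lasso s (map s [0..<a + p]) (map s [a + p - 1..<a + p - 1 + p])"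
proof -
  define L where "L = a + p - 1"
  have "a \<le> L"
    using \<open>0 < p\<close> by (simp add: L_def)
  have "lasso s (map s [0..<a + p]) (map s [L..<L + p])"
    unfolding lasso_def
  proof (intro conjI allI impI)
    show "map s [0..<a + p] \<noteq> []" "map s [L..<L + p] \<noteq> []"
      using \<open>0 < p\<close> by simp_all
    show "distinct (map s [L..<L + p])"
      using iter repeat inj \<open>0 < p\<close> \<open>a \<le> L\<close> by (rule iterate_window_distinct)
    show "hd (map s [L..<L + p]) = last (map s [0..<a + p])"
      using \<open>0 < p\<close> by (simp add: L_def hd_map last_map)
    show "s i = map s [0..<a + p] ! i" if "i < length (map s [0..<a + p])" for i
      using that by simp
    show "s (length (map s [0..<a + p]) - 1 + j) = map s [L..<L + p] ! (j mod length (map s [L..<L + p]))"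
      for j
    proof -
      have "s (L + j) = s (L + j mod p + (j div p) * p)"
        by (simp add: add.assoc)
      also have "\<dots> = s (L + j mod p)"
        using \<open>a \<le> L\<close> by (intro iterate_periodic[OF iter repeat]) simp
      also have "\<dots> = map s [L..<L + p] ! (j mod p)"
        using \<open>0 < p\<close> by simp
      finally show ?thesis
        by (simp add: L_def)
    qed
  qed
  then show ?thesis
    by (simp add: L_def)
qed

lemma lasso_of_iterate:
  fixes s :: "nat \<Rightarrow> 'v::finite"
  assumes iter: "\<And>j. s (Suc j) = f (s j)" and inj: "inj_on s {..K}"
  shows "\<exists>\<mu> \<eta>. lasso s \<mu> \<eta> \<and> K < length \<mu> \<and> length \<mu> \<le> card (UNIV :: 'v set)"
proof -
  obtain a p where "0 < p" and repeat: "s (a + p) = s a" and inj_repeat: "inj_on s {..<a + p}"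
    by (rule obtain_first_repeat)
  have "K < a + p"
  proof (rule ccontr)
    assume "\<not> K < a + p"
    then have "a + p = a"
      using inj repeat by (auto dest: inj_onD)
    then show False
      using \<open>0 < p\<close> by simp
  qed
  moreover have "a + p \<le> card (UNIV :: 'v set)"
    using card_inj_on_le[OF inj_repeat] by simp
  ultimately show ?thesis
    using lasso_of_repeat[OF iter repeat inj_repeat \<open>0 < p\<close>] by auto
qed

section \<open>Shortcuts of equilibrium outcomes\<close>

text \<open>The last clause: a player whose target \<open>\<rho>'\<close> has not reached by step \<open>n\<close> has not been
  reached by \<open>\<rho>\<close> at position \<open>\<pi> n\<close> either, and its remaining cost along \<open>\<rho>'\<close> from \<open>n\<close> is at
  most its remaining cost along \<open>\<rho>\<close> from \<open>\<pi> n\<close> (stated without subtraction).\<close>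

definition is_shortcut :: "('p, 'v, 'a) cgame \<Rightarrow> (nat \<Rightarrow> 'v) \<Rightarrow> (nat \<Rightarrow> nat) \<Rightarrow> (nat \<Rightarrow> 'v) \<Rightarrow> bool" where
  "is_shortcut G \<rho> \<pi> \<rho>' \<longleftrightarrow> \<rho>' 0 = \<rho> 0 \<and> (\<forall>n. \<rho>' n = \<rho> (\<pi> n) \<and> \<rho>' (Suc n) = \<rho> (Suc (\<pi> n))) \<and>
     (\<forall>\<alpha> n. (\<forall>k\<le>n. \<rho>' k \<notin> target G \<alpha>) \<longrightarrow> (\<forall>k\<le>\<pi> n. \<rho> k \<notin> target G \<alpha>) \<and>
        play_cost G \<rho>' \<alpha> + enat (path_cost G \<rho> (\<pi> n) \<alpha>) \<le> play_cost G \<rho> \<alpha> + enat (path_cost G \<rho>' n \<alpha>))"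

lemma is_shortcutD:
  assumes "is_shortcut G \<rho> \<pi> \<rho>'"
  shows "\<rho>' 0 = \<rho> 0" and "\<rho>' n = \<rho> (\<pi> n)" and "\<rho>' (Suc n) = \<rho> (Suc (\<pi> n))"
    and "\<forall>k\<le>n. \<rho>' k \<notin> target G \<alpha> \<Longrightarrow> \<forall>k\<le>\<pi> n. \<rho> k \<notin> target G \<alpha>"
    and "\<forall>k\<le>n. \<rho>' k \<notin> target G \<alpha> \<Longrightarrow>
      play_cost G \<rho>' \<alpha> + enat (path_cost G \<rho> (\<pi> n) \<alpha>) \<le> play_cost G \<rho> \<alpha> + enat (path_cost G \<rho>' n \<alpha>)"
  using assms unfolding is_shortcut_def by blast+

lemma shortcut_play_cost_le:
  assumes "is_shortcut G \<rho> \<pi> \<rho>'"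
  shows "play_cost G \<rho>' \<alpha> \<le> play_cost G \<rho> \<alpha>"
proof (cases "\<rho>' 0 \<in> target G \<alpha>")
  case True
  then have "play_cost G \<rho>' \<alpha> = 0"
    using play_cost_first_visit[of \<rho>' 0] by (simp add: zero_enat_def)
  then show ?thesis
    by simp
next
  case False
  then have "play_cost G \<rho>' \<alpha> + enat (path_cost G \<rho> (\<pi> 0) \<alpha>) \<le> play_cost G \<rho> \<alpha> + enat 0"
    using is_shortcutD(5)[OF assms, of 0] by simp
  then show ?thesis
    by (simp add: zero_enat_def[symmetric]) (meson le_iff_add order_trans)
qed

locale NE_shortcut =
  fixes G :: "('p, 'v, 'a) cgame" and P :: "('p, 'v, 'a) profile"
    and \<pi> :: "nat \<Rightarrow> nat" and \<rho>' :: "nat \<Rightarrow> 'v"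
  assumes NE: "is_NE G P" and shortcut: "is_shortcut G (outcome G P) \<pi> \<rho>'"
begin

abbreviation \<rho> where "\<rho> \<equiv> outcome G P"

lemma shortcut_init: "\<rho>' 0 = init G"
  using is_shortcutD(1)[OF shortcut] by (simp add: outcome_0)

lemmas shortcut_edge = is_shortcutD(2,3)[OF shortcut]

text \<open>A history that follows \<open>\<rho>'\<close> up to step \<open>m\<close> and then leaves it is translated into the
  history of \<open>\<rho>\<close> up to position \<open>\<pi> m\<close> followed by the same continuation, so that the other
  players punish the deviator as \<open>P\<close> punishes a deviation from \<open>\<rho>\<close> at \<open>\<pi> m\<close>.\<close>

definition replay :: "'v list \<Rightarrow> 'v list" where
  "replay h = (if \<exists>m. prefix (map \<rho>' [0..<Suc m]) h
     then (let m = GREATEST m. prefix (map \<rho>' [0..<Suc m]) h in map \<rho> [0..<Suc (\<pi> m)] @ drop (Suc m) h)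
     else h)"

definition shortcut_profile :: "('p, 'v, 'a) profile" where
  "shortcut_profile \<beta> h = P \<beta> (replay h)"

lemma replay_append:
  assumes "X = [] \<or> hd X \<noteq> \<rho>' (Suc n)"
  shows "replay (map \<rho>' [0..<Suc n] @ X) = map \<rho> [0..<Suc (\<pi> n)] @ X"
proof -
  let ?follows = "\<lambda>m. prefix (map \<rho>' [0..<Suc m]) (map \<rho>' [0..<Suc n] @ X)"
  have "(GREATEST m. ?follows m) = n"
  proof (rule Greatest_equality)
    show "?follows n"
      by simp
  next
    fix m
    assume "?follows m"
    show "m \<le> n"
    proof (rule ccontr)
      assume "\<not> m \<le> n"
      then have "[0..<Suc m] = [0..<Suc n] @ Suc n # [Suc (Suc n)..<Suc m]"
        using upt_add_eq_append[of 0 "Suc n" "m - n"] by (simp add: upt_conv_Cons)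
      then have "prefix (\<rho>' (Suc n) # map \<rho>' [Suc (Suc n)..<Suc m]) X"
        using \<open>?follows m\<close> by simp
      then show False
        using assms by (cases X) auto
    qed
  qed
  moreover have "\<exists>m. ?follows m"
    by (rule exI[of _ n]) simp
  ultimately show ?thesis
    unfolding replay_def by (simp add: Let_def)
qed

lemma outcome_shortcut_profile: "outcome G shortcut_profile = \<rho>'"
proof (rule outcome_eqI)
  show "\<rho>' 0 = init G"
    by (rule shortcut_init)
next
  fix n
  have "\<rho>' (Suc n) = trans G (\<rho> (\<pi> n)) (\<lambda>\<beta>. P \<beta> (map \<rho> [0..<Suc (\<pi> n)]))"
    unfolding shortcut_edge(2) by (rule outcome_Suc)
  also have "\<dots> = trans G (\<rho>' n) (\<lambda>\<beta>. shortcut_profile \<beta> (map \<rho>' [0..<Suc n]))"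
    using replay_append[of "[]" n] by (simp add: shortcut_profile_def shortcut_edge)
  finally show "\<rho>' (Suc n) = trans G (\<rho>' n) (\<lambda>\<beta>. shortcut_profile \<beta> (map \<rho>' [0..<Suc n]))" .
qed

text \<open>The converse translation, for the deviator: against \<open>P\<close> it follows \<open>\<rho>\<close> up to \<open>\<pi> n\<close> and
  then plays what \<open>\<sigma>\<close> plays on the corresponding history of \<open>\<rho>'\<close>.\<close>

definition replayed_deviation :: "'p \<Rightarrow> ('v, 'a) strategy \<Rightarrow> nat \<Rightarrow> ('v, 'a) strategy" where
  "replayed_deviation \<alpha> \<sigma> n h = (if prefix (map \<rho> [0..<Suc (\<pi> n)]) h
     then \<sigma> (map \<rho>' [0..<Suc n] @ drop (Suc (\<pi> n)) h) else P \<alpha> h)"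

lemma valid_replayed_deviation:
  assumes "valid_strategy G \<alpha> \<sigma>"
  shows "valid_strategy G \<alpha> (replayed_deviation \<alpha> \<sigma> n)"
  using assms NE unfolding valid_strategy_def replayed_deviation_def is_NE_def valid_profile_def
  by auto

lemma replayed_deviation_acts:
  assumes "X = [] \<or> hd X \<noteq> \<rho>' (Suc n)"
  shows "(P(\<alpha> := replayed_deviation \<alpha> \<sigma> n)) \<beta> (map \<rho> [0..<Suc (\<pi> n)] @ X) =
    (shortcut_profile(\<alpha> := \<sigma>)) \<beta> (map \<rho>' [0..<Suc n] @ X)"
  using assms by (simp add: replayed_deviation_def shortcut_profile_def replay_append del: upt_Suc)

lemma replayed_deviation_before:
  assumes "Suc k \<le> \<pi> n"
  shows "(P(\<alpha> := replayed_deviation \<alpha> \<sigma> n)) \<beta> (map \<rho> [0..<Suc k]) = P \<beta> (map \<rho> [0..<Suc k])"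
proof -
  have "\<not> prefix (map \<rho> [0..<Suc (\<pi> n)]) (map \<rho> [0..<Suc k])"
    using assms prefix_length_le by fastforce
  then show ?thesis
    by (simp add: replayed_deviation_def del: upt_Suc)
qed

lemma outcome_replayed_deviation:
  fixes \<alpha> \<sigma> n
  defines "\<rho>\<^sub>1 \<equiv> outcome G (shortcut_profile(\<alpha> := \<sigma>))"
  assumes agree: "\<forall>k\<le>n. \<rho>\<^sub>1 k = \<rho>' k" and leave: "\<rho>\<^sub>1 (Suc n) \<noteq> \<rho>' (Suc n)"
  shows "outcome G (P(\<alpha> := replayed_deviation \<alpha> \<sigma> n)) =
    (\<lambda>k. if k \<le> \<pi> n then \<rho> k else \<rho>\<^sub>1 (n + (k - \<pi> n)))" (is "_ = ?r")
proof (rule outcome_eqI)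
  define X where "X j = map (\<lambda>i. \<rho>\<^sub>1 (Suc n + i)) [0..<j]" for j
  have \<rho>\<^sub>1_hist: "map \<rho>\<^sub>1 [0..<Suc (n + j)] = map \<rho>' [0..<Suc n] @ X j" for j
    using agree unfolding X_def map_upt_Suc_add by (simp del: upt_Suc)
  have r_hist: "map ?r [0..<Suc (\<pi> n + j)] = map \<rho> [0..<Suc (\<pi> n)] @ X j" for j
    unfolding X_def map_upt_Suc_add by (simp del: upt_Suc)
  have X_leaves: "X j = [] \<or> hd (X j) \<noteq> \<rho>' (Suc n)" for j
    using leave unfolding X_def by (cases j) (simp_all add: upt_conv_Cons del: upt_Suc)
  show "?r 0 = init G"
    by (simp add: outcome_0)
  fix k
  show "?r (Suc k) = trans G (?r k) (\<lambda>\<beta>. (P(\<alpha> := replayed_deviation \<alpha> \<sigma> n)) \<beta> (map ?r [0..<Suc k]))"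
  proof (cases "Suc k \<le> \<pi> n")
    case True
    have hist: "map ?r [0..<Suc k] = map \<rho> [0..<Suc k]"
      using True by (simp del: upt_Suc)
    have "(P(\<alpha> := replayed_deviation \<alpha> \<sigma> n)) \<beta> (map ?r [0..<Suc k]) = P \<beta> (map \<rho> [0..<Suc k])"
      for \<beta>
      unfolding hist using True by (rule replayed_deviation_before)
    moreover have "?r (Suc k) = \<rho> (Suc k)" "?r k = \<rho> k"
      using True by simp_all
    ultimately show ?thesis
      by (simp only: outcome_Suc)
  next
    case False
    then obtain j where k: "k = \<pi> n + j"
      using le_Suc_ex not_less_eq_eq by blast
    have "?r k = \<rho>\<^sub>1 (n + j)"
      using agree shortcut_edge(1)[of n] unfolding k by (cases j) auto
    moreover have "?r (Suc k) = \<rho>\<^sub>1 (Suc (n + j))"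
      unfolding k by simp
    moreover have "(P(\<alpha> := replayed_deviation \<alpha> \<sigma> n)) \<beta> (map ?r [0..<Suc k]) =
        (shortcut_profile(\<alpha> := \<sigma>)) \<beta> (map \<rho>\<^sub>1 [0..<Suc (n + j)])" for \<beta>
      unfolding k r_hist \<rho>\<^sub>1_hist using X_leaves by (rule replayed_deviation_acts)
    ultimately show ?thesis
      unfolding \<rho>\<^sub>1_def by (simp add: outcome_Suc)
  qed
qed

lemma play_cost_replayed_deviation:
  fixes \<alpha> \<sigma> n
  defines "\<rho>\<^sub>1 \<equiv> outcome G (shortcut_profile(\<alpha> := \<sigma>))"
  assumes agree: "\<forall>k\<le>n. \<rho>\<^sub>1 k = \<rho>' k" and leave: "\<rho>\<^sub>1 (Suc n) \<noteq> \<rho>' (Suc n)"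
    and unreached: "\<forall>k\<le>n. \<rho>' k \<notin> target G \<alpha>"
  shows "play_cost G (outcome G (P(\<alpha> := replayed_deviation \<alpha> \<sigma> n))) \<alpha> =
    enat (path_cost G \<rho> (\<pi> n) \<alpha>) + play_cost G (\<lambda>j. \<rho>\<^sub>1 (n + j)) \<alpha>"
proof -
  define r where "r = outcome G (P(\<alpha> := replayed_deviation \<alpha> \<sigma> n))"
  have r: "r = (\<lambda>k. if k \<le> \<pi> n then \<rho> k else \<rho>\<^sub>1 (n + (k - \<pi> n)))"
    using agree leave unfolding r_def \<rho>\<^sub>1_def by (rule outcome_replayed_deviation)
  have "play_cost G r \<alpha> = enat (path_cost G r (\<pi> n) \<alpha>) + play_cost G (\<lambda>j. r (\<pi> n + j)) \<alpha>"
    using is_shortcutD(4)[OF shortcut unreached] by (intro play_cost_split) (simp add: r)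
  moreover have "path_cost G r (\<pi> n) \<alpha> = path_cost G \<rho> (\<pi> n) \<alpha>"
    unfolding r by (rule path_cost_cong) simp
  moreover have "(\<lambda>j. r (\<pi> n + j)) = (\<lambda>j. \<rho>\<^sub>1 (n + j))"
    using agree shortcut_edge(1)[of n] unfolding r by (auto simp: fun_eq_iff)
  ultimately show ?thesis
    unfolding r_def by simp
qed

lemma play_cost_after_leaving:
  fixes \<alpha> \<sigma> n
  defines "\<rho>\<^sub>1 \<equiv> outcome G (shortcut_profile(\<alpha> := \<sigma>))"
  assumes \<sigma>: "valid_strategy G \<alpha> \<sigma>"
    and agree: "\<forall>k\<le>n. \<rho>\<^sub>1 k = \<rho>' k" and leave: "\<rho>\<^sub>1 (Suc n) \<noteq> \<rho>' (Suc n)"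
    and unreached: "\<forall>k\<le>n. \<rho>' k \<notin> target G \<alpha>"
  shows "play_cost G \<rho>' \<alpha> \<le> play_cost G \<rho>\<^sub>1 \<alpha>"
proof -
  define r where "r = outcome G (P(\<alpha> := replayed_deviation \<alpha> \<sigma> n))"
  have "play_cost G \<rho> \<alpha> \<le> play_cost G r \<alpha>"
    using NE valid_replayed_deviation[OF \<sigma>] unfolding is_NE_def cost_def r_def by blast
  have split_r: "play_cost G r \<alpha> = enat (path_cost G \<rho> (\<pi> n) \<alpha>) + play_cost G (\<lambda>j. \<rho>\<^sub>1 (n + j)) \<alpha>"
    using agree leave unreached unfolding r_def \<rho>\<^sub>1_def by (rule play_cost_replayed_deviation)
  have "play_cost G \<rho>\<^sub>1 \<alpha> = enat (path_cost G \<rho>\<^sub>1 n \<alpha>) + play_cost G (\<lambda>j. \<rho>\<^sub>1 (n + j)) \<alpha>"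
    using agree unreached by (intro play_cost_split) simp
  moreover have "path_cost G \<rho>\<^sub>1 n \<alpha> = path_cost G \<rho>' n \<alpha>"
    using agree by (intro path_cost_cong) simp
  ultimately have split_\<rho>\<^sub>1: "play_cost G \<rho>\<^sub>1 \<alpha> = enat (path_cost G \<rho>' n \<alpha>) + play_cost G (\<lambda>j. \<rho>\<^sub>1 (n + j)) \<alpha>"
    by simp
  have "play_cost G \<rho>' \<alpha> + enat (path_cost G \<rho> (\<pi> n) \<alpha>) \<le> play_cost G \<rho> \<alpha> + enat (path_cost G \<rho>' n \<alpha>)"
    using is_shortcutD(5)[OF shortcut unreached] .
  also have "\<dots> \<le> play_cost G r \<alpha> + enat (path_cost G \<rho>' n \<alpha>)"
    using \<open>play_cost G \<rho> \<alpha> \<le> play_cost G r \<alpha>\<close> by (rule add_right_mono)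
  also have "\<dots> = play_cost G \<rho>\<^sub>1 \<alpha> + enat (path_cost G \<rho> (\<pi> n) \<alpha>)"
    unfolding split_r split_\<rho>\<^sub>1 by (simp add: ac_simps)
  finally show ?thesis
    by simp
qed

lemma deviation_unprofitable:
  assumes \<sigma>: "valid_strategy G \<alpha> \<sigma>"
  shows "cost G shortcut_profile \<alpha> \<le> cost G (shortcut_profile(\<alpha> := \<sigma>)) \<alpha>"
proof -
  define \<rho>\<^sub>1 where "\<rho>\<^sub>1 = outcome G (shortcut_profile(\<alpha> := \<sigma>))"
  have "play_cost G \<rho>' \<alpha> \<le> play_cost G \<rho>\<^sub>1 \<alpha>"
  proof (cases "\<rho>\<^sub>1 = \<rho>'")
    case False
    moreover have "\<rho>\<^sub>1 0 = \<rho>' 0"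
      by (simp add: \<rho>\<^sub>1_def outcome_0 shortcut_init)
    ultimately obtain n where agree: "\<forall>k\<le>n. \<rho>\<^sub>1 k = \<rho>' k" and leave: "\<rho>\<^sub>1 (Suc n) \<noteq> \<rho>' (Suc n)"
      using first_divergence by metis
    show ?thesis
    proof (cases "\<exists>k\<le>n. \<rho>' k \<in> target G \<alpha>")
      case True
      then obtain k where "k \<le> n" "\<rho>' k \<in> target G \<alpha>"
        by blast
      then have "play_cost G \<rho>' \<alpha> = play_cost G \<rho>\<^sub>1 \<alpha>"
        using agree by (intro play_cost_cong[of n]) auto
      then show ?thesis
        by simp
    next
      case False
      then show ?thesis
        using play_cost_after_leaving[OF \<sigma>] agree leave unfolding \<rho>\<^sub>1_def by blast
    qed
  qed simp
  then show ?thesis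
    unfolding cost_def outcome_shortcut_profile \<rho>\<^sub>1_def .
qed

lemma cost_shortcut_profile_le: "cost G shortcut_profile \<le> cost G P"
  using shortcut_play_cost_le[OF shortcut]
  unfolding cost_def outcome_shortcut_profile by (simp add: le_fun_def)

lemma shortcut_profile_NE: "is_NE G shortcut_profile"
  using NE deviation_unprofitable
  unfolding is_NE_def valid_profile_def valid_strategy_def shortcut_profile_def by auto

end

section \<open>Construction of the shortcut\<close>

locale shortcut_construction =
  fixes G :: "('p::finite, 'v::finite, 'a) cgame" and \<rho> :: "nat \<Rightarrow> 'v"
begin

definition reached :: "'p set" where
  "reached = {\<alpha>. \<exists>n. \<rho> n \<in> target G \<alpha>}"

definition first_visit :: "'p \<Rightarrow> nat" where
  "first_visit \<alpha> = (LEAST n. \<rho> n \<in> target G \<alpha>)"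

definition horizon :: nat where
  "horizon = Max (insert 0 (first_visit ` reached))"

definition deadline :: "'p set \<Rightarrow> nat" where
  "deadline M = Min (insert horizon (first_visit ` (reached - M)))"

definition visitors :: "'v \<Rightarrow> 'p set" where
  "visitors v = {\<alpha>. v \<in> target G \<alpha>}"

text \<open>The fallback to the first occurrence keeps \<open>last_occ b\<close> a function of the state even when
  no occurrence lies before \<open>b\<close>; this makes the shortcut memoryless once the deadline is fixed.\<close>

definition last_occ :: "nat \<Rightarrow> 'v \<Rightarrow> nat" where
  "last_occ b v = (if \<exists>q\<le>b. \<rho> q = v then GREATEST q. q \<le> b \<and> \<rho> q = v else LEAST q. \<rho> q = v)"

fun walk :: "nat \<Rightarrow> 'v \<times> 'p set" where
  "walk 0 = (\<rho> 0, visitors (\<rho> 0))"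
| "walk (Suc n) = (let (v, M) = walk n; v' = \<rho> (Suc (last_occ (deadline M) v)) in (v', M \<union> visitors v'))"

definition short :: "nat \<Rightarrow> 'v" where
  "short n = fst (walk n)"

definition served :: "nat \<Rightarrow> 'p set" where
  "served n = snd (walk n)"

definition jump :: "nat \<Rightarrow> nat" where
  "jump n = last_occ (deadline (served n)) (short n)"

definition entry :: "nat \<Rightarrow> nat" where
  "entry n = (case n of 0 \<Rightarrow> 0 | Suc m \<Rightarrow> Suc (jump m))"

lemma short_0: "short 0 = \<rho> 0"
  by (simp add: short_def)

lemma short_Suc: "short (Suc n) = \<rho> (Suc (jump n))"
  by (simp add: short_def jump_def served_def split_def Let_def)

lemma served_eq: "served n = {\<alpha>. \<exists>k\<le>n. short k \<in> target G \<alpha>}"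
proof (induction n)
  case 0
  then show ?case
    by (simp add: served_def short_def visitors_def)
next
  case (Suc n)
  have "served (Suc n) = served n \<union> visitors (short (Suc n))"
    by (simp add: served_def short_def split_def Let_def)
  then show ?case
    using Suc by (auto simp: visitors_def le_Suc_eq)
qed

lemma served_mono: "n \<le> m \<Longrightarrow> served n \<subseteq> served m"
  unfolding served_eq by (auto intro: le_trans)

lemma last_occ_greatest:
  assumes "q \<le> b" and "\<rho> q = v"
  shows "last_occ b v \<le> b" and "\<rho> (last_occ b v) = v"
    and "\<And>q'. q' \<le> b \<Longrightarrow> \<rho> q' = v \<Longrightarrow> q' \<le> last_occ b v"
proof -
  let ?before = "\<lambda>q. q \<le> b \<and> \<rho> q = v"
  have last: "last_occ b v = Greatest ?before"
    using assms by (auto simp: last_occ_def)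
  have "?before (Greatest ?before)"
    using GreatestI_nat[of ?before q b] assms by blast
  then show "last_occ b v \<le> b" and "\<rho> (last_occ b v) = v"
    unfolding last by simp_all
  show "q' \<le> last_occ b v" if "q' \<le> b" "\<rho> q' = v" for q'
    unfolding last using Greatest_le_nat[of ?before q' b] that by blast
qed

lemma last_occ_state: "\<rho> (last_occ b (\<rho> x)) = \<rho> x"
proof (cases "\<exists>q\<le>b. \<rho> q = \<rho> x")
  case True
  then show ?thesis
    using last_occ_greatest(2) by blast
next
  case False
  then have "last_occ b (\<rho> x) = (LEAST q. \<rho> q = \<rho> x)"
    unfolding last_occ_def by (rule if_not_P)
  then show ?thesis
    using LeastI[of "\<lambda>q. \<rho> q = \<rho> x" x] by simp
qed

lemma entry_state: "\<rho> (entry n) = short n"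
  by (cases n) (simp_all add: entry_def short_0 short_Suc)

lemma short_edge: "short n = \<rho> (jump n)" "short (Suc n) = \<rho> (Suc (jump n))"
  using last_occ_state[of _ "entry n"] by (simp_all add: jump_def entry_state short_Suc)

lemma served_subset_reached: "served n \<subseteq> reached"
  unfolding served_eq reached_def by (auto simp flip: entry_state)

lemma first_visit_in_target: "\<alpha> \<in> reached \<Longrightarrow> \<rho> (first_visit \<alpha>) \<in> target G \<alpha>"
  unfolding reached_def first_visit_def by (auto intro: LeastI)

lemma before_first_visit: "k < first_visit \<alpha> \<Longrightarrow> \<rho> k \<notin> target G \<alpha>"
  unfolding first_visit_def by (rule not_less_Least)

lemma first_visit_le: "\<rho> k \<in> target G \<alpha> \<Longrightarrow> first_visit \<alpha> \<le> k"
  unfolding first_visit_def by (rule Least_le)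

lemma first_visit_le_horizon: "\<alpha> \<in> reached \<Longrightarrow> first_visit \<alpha> \<le> horizon"
  unfolding horizon_def by (rule Max_ge) auto

lemma deadline_le_first_visit: "\<alpha> \<in> reached - M \<Longrightarrow> deadline M \<le> first_visit \<alpha>"
  unfolding deadline_def by (rule Min_le) auto

lemma jump_bounds_from_entry:
  assumes entry_early: "\<forall>\<alpha>\<in>reached - served n. entry n \<le> first_visit \<alpha>"
    and unfinished: "reached - served n \<noteq> {}"
  shows "entry n \<le> jump n" and "jump n \<le> deadline (served n)"
    and "\<And>q. q \<le> deadline (served n) \<Longrightarrow> \<rho> q = short n \<Longrightarrow> q \<le> jump n"
    and "\<And>\<alpha>. \<alpha> \<in> reached - served n \<Longrightarrow> jump n < first_visit \<alpha>"
proof -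
  obtain \<beta> where \<beta>: "\<beta> \<in> reached - served n"
    using unfinished by blast
  have entry_deadline: "entry n \<le> deadline (served n)"
    unfolding deadline_def using entry_early \<beta> first_visit_le_horizon by (auto intro: le_trans)
  note last = last_occ_greatest[OF entry_deadline entry_state, folded jump_def]
  show "entry n \<le> jump n"
    using last(3)[OF entry_deadline entry_state] .
  show "jump n \<le> deadline (served n)"
    using last(1) .
  show "q \<le> jump n" if "q \<le> deadline (served n)" "\<rho> q = short n" for q
    using last(3) that .
  show "jump n < first_visit \<alpha>" if \<alpha>: "\<alpha> \<in> reached - served n" for \<alpha>
  proof -
    have "jump n \<le> first_visit \<alpha>"
      using last(1) deadline_le_first_visit[OF \<alpha>] by linarith
    moreover have "\<rho> (jump n) \<notin> target G \<alpha>"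
      using \<alpha> short_edge(1)[of n] unfolding served_eq by auto
    then have "jump n \<noteq> first_visit \<alpha>"
      using first_visit_in_target \<alpha> by auto
    ultimately show ?thesis
      by simp
  qed
qed

lemma entry_le_first_visit: "\<alpha> \<in> reached - served n \<Longrightarrow> entry n \<le> first_visit \<alpha>"
proof (induction n arbitrary: \<alpha>)
  case 0
  then show ?case
    by (simp add: entry_def)
next
  case (Suc n)
  then have "\<alpha> \<in> reached - served n"
    using served_mono[of n "Suc n"] by auto
  then have "jump n < first_visit \<alpha>"
    using jump_bounds_from_entry(4)[of n \<alpha>] Suc.IH by blast
  then show ?case
    by (simp add: entry_def)
qed

lemma jump_bounds:
  assumes "reached - served n \<noteq> {}"
  shows "entry n \<le> jump n" and "jump n \<le> deadline (served n)"
    and "\<And>q. q \<le> deadline (served n) \<Longrightarrow> \<rho> q = short n \<Longrightarrow> q \<le> jump n"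
  using jump_bounds_from_entry[OF _ assms] entry_le_first_visit by blast+

lemma jump_less_first_visit: "\<alpha> \<in> reached - served n \<Longrightarrow> jump n < first_visit \<alpha>"
  using jump_bounds_from_entry(4) entry_le_first_visit by blast

lemma unfinished_mono: "n \<le> m \<Longrightarrow> reached - served m \<noteq> {} \<Longrightarrow> reached - served n \<noteq> {}"
  using served_mono[of n m] by auto

lemma jump_strict_mono:
  assumes "m < m'" and "reached - served m' \<noteq> {}"
  shows "jump m < jump m'"
  using assms
proof (induction m')
  case (Suc k)
  have unfinished: "reached - served k \<noteq> {}"
    using Suc.prems(2) by (rule unfinished_mono[rotated]) simp
  have step: "jump k < jump (Suc k)"
    using jump_bounds(1)[OF Suc.prems(2)] by (simp add: entry_def)
  show ?case
  proof (cases "m = k")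
    case False
    then have "jump m < jump k"
      using Suc.prems(1) Suc.IH unfinished by simp
    then show ?thesis
      using step by simp
  qed (use step in simp)
qed simp

lemma eventually_all_served: "\<exists>n. reached \<subseteq> served n"
proof (rule ccontr)
  assume "\<nexists>n. reached \<subseteq> served n"
  then have unfinished: "reached - served n \<noteq> {}" for n
    by blast
  have "n \<le> jump n" for n
  proof (induction n)
    case (Suc n)
    then show ?case
      using jump_strict_mono[of n "Suc n"] unfinished by fastforce
  qed simp
  moreover obtain \<alpha> where "\<alpha> \<in> reached - served horizon"
    using unfinished by blast
  then have "jump horizon < horizon"
    using jump_less_first_visit first_visit_le_horizon by (meson DiffD1 order_less_le_trans)
  ultimately show False
    using not_le by blast
qed

definition finish :: nat where
  "finish = (LEAST n. reached \<subseteq> served n)"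

lemma all_served_finish: "reached \<subseteq> served n \<longleftrightarrow> finish \<le> n"
proof
  show "finish \<le> n" if "reached \<subseteq> served n"
    unfolding finish_def using that by (rule Least_le)
  show "reached \<subseteq> served n" if "finish \<le> n"
    using LeastI_ex[OF eventually_all_served] served_mono[OF that] unfolding finish_def by blast
qed

lemma jump_mono:
  assumes "m \<le> m'" and "reached - served m' \<noteq> {}"
  shows "jump m \<le> jump m'"
proof (cases "m = m'")
  case False
  then show ?thesis
    using jump_strict_mono[of m m'] assms by simp
qed simp

lemma unreached_before_jump:
  assumes "\<forall>k\<le>n. short k \<notin> target G \<alpha>" and "k \<le> jump n"
  shows "\<rho> k \<notin> target G \<alpha>"
proof (cases "\<alpha> \<in> reached")
  case True
  then have "\<alpha> \<in> reached - served n"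
    using assms(1) unfolding served_eq by blast
  then show ?thesis
    using jump_less_first_visit assms(2) before_first_visit by (meson le_less_trans)
qed (auto simp: reached_def)

text \<open>The steps of the shortcut from \<open>n\<close> on use the edges of \<open>\<rho>\<close> at the strictly increasing
  positions \<open>jump n, jump (n + 1), \<dots>\<close>, all before the first visit of \<open>\<rho>\<close> to the target.\<close>

lemma short_segment_cost_le:
  assumes unserved: "\<And>i. i < d \<Longrightarrow> \<alpha> \<in> reached - served (n + i)"
    and e: "first_visit \<alpha> = jump n + e"
  shows "path_cost G (\<lambda>j. short (n + j)) d \<alpha> \<le> path_cost G (\<lambda>j. \<rho> (jump n + j)) e \<alpha>"
proof -
  define f where "f j = tcost G (\<rho> (jump n + j)) (\<rho> (Suc (jump n + j))) \<alpha>" for j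
  define p where "p i = jump (n + i) - jump n" for i
  have jump_shift: "jump (n + i) = jump n + p i" if "i < d" for i
  proof -
    have "jump n \<le> jump (n + i)"
      using unserved[OF that] by (intro jump_mono) auto
    then show ?thesis
      by (simp add: p_def)
  qed
  have "strict_mono_on {..<d} p"
  proof (rule strict_mono_onI)
    fix i j
    assume "i \<in> {..<d}" "j \<in> {..<d}" "i < j"
    then show "p i < p j"
      using jump_strict_mono[of "n + i" "n + j"] unserved[of j] jump_shift[of i] jump_shift[of j] by auto
  qed
  moreover have "p i < e" if "i < d" for i
    using jump_less_first_visit[OF unserved[OF that]] jump_shift[OF that] e by simp
  ultimately have "(\<Sum>i<d. f (p i)) \<le> (\<Sum>j<e. f j)"
    by (intro sum_inj_le strict_mono_on_imp_inj_on)
  moreover have short_step: "short (n + i) = \<rho> (jump n + p i)" "short (Suc (n + i)) = \<rho> (Suc (jump n + p i))"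
    if "i < d" for i
    using short_edge[of "n + i"] jump_shift[OF that] by simp_all
  have "path_cost G (\<lambda>j. short (n + j)) d \<alpha> = (\<Sum>i<d. f (p i))"
    unfolding path_cost_def f_def using short_step by (intro sum.cong) simp_all
  ultimately show ?thesis
    by (simp add: path_cost_def f_def)
qed

lemma short_residual_cost:
  assumes unreached: "\<forall>k\<le>n. short k \<notin> target G \<alpha>"
  shows "play_cost G short \<alpha> + enat (path_cost G \<rho> (jump n) \<alpha>) \<le> play_cost G \<rho> \<alpha> + enat (path_cost G short n \<alpha>)"
proof (cases "\<alpha> \<in> reached")
  case False
  then show ?thesis
    by (simp add: reached_def play_cost_unreached)
next
  case True
  then have "\<alpha> \<in> served finish"
    using all_served_finish[of finish] by blast
  then obtain L where L: "short L \<in> target G \<alpha>" "\<And>k. k < L \<Longrightarrow> short k \<notin> target G \<alpha>"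
    unfolding served_eq by (blast elim: obtain_first_visit)
  then have "n < L"
    using unreached by (meson not_less)
  define d where "d = L - n"
  have d: "L = n + d"
    using \<open>n < L\<close> by (simp add: d_def)
  have unserved: "\<alpha> \<in> reached - served m" if "m < L" for m
    using True L(2) that unfolding served_eq by auto
  define e where "e = first_visit \<alpha> - jump n"
  have e: "first_visit \<alpha> = jump n + e"
    using jump_less_first_visit[OF unserved[OF \<open>n < L\<close>]] by (simp add: e_def)
  have "path_cost G (\<lambda>j. short (n + j)) d \<alpha> \<le> path_cost G (\<lambda>j. \<rho> (jump n + j)) e \<alpha>"
    using unserved d e by (intro short_segment_cost_le) auto
  moreover have "play_cost G short \<alpha> = enat (path_cost G short L \<alpha>)"
    using L by (rule play_cost_first_visit)
  moreover have "play_cost G \<rho> \<alpha> = enat (path_cost G \<rho> (first_visit \<alpha>) \<alpha>)"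
    using True by (intro play_cost_first_visit first_visit_in_target before_first_visit)
  ultimately show ?thesis
    unfolding d e path_cost_add by simp
qed

lemma short_is_shortcut: "is_shortcut G \<rho> jump short"
  unfolding is_shortcut_def
  using short_0 short_edge unreached_before_jump short_residual_cost by blast

lemma unfinished_before_finish: "n < finish \<Longrightarrow> reached - served n \<noteq> {}"
  using all_served_finish[of n] by auto

lemma entry_mono: "k \<le> k' \<Longrightarrow> k' \<le> finish \<Longrightarrow> entry k \<le> entry k'"
proof (cases k)
  case (Suc m)
  assume "k \<le> k'" "k' \<le> finish"
  then obtain m' where "k' = Suc m'" "m \<le> m'" "m' < finish"
    using Suc by (cases k') auto
  then show ?thesis
    using Suc jump_mono[of m m'] unfinished_before_finish[of m'] by (simp add: entry_def)
qed (simp add: entry_def)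

lemma entry_le_horizon: "n \<le> finish \<Longrightarrow> entry n \<le> horizon"
proof (cases n)
  case (Suc m)
  assume "n \<le> finish"
  then obtain \<alpha> where \<alpha>: "\<alpha> \<in> reached - served m"
    using Suc unfinished_before_finish[of m] by auto
  have "jump m < first_visit \<alpha>" "first_visit \<alpha> \<le> horizon"
    using jump_less_first_visit[OF \<alpha>] first_visit_le_horizon \<alpha> by simp_all
  then show ?thesis
    using Suc by (simp add: entry_def)
qed (simp add: entry_def)

lemma first_visit_le_entry_finish: "\<alpha> \<in> reached \<Longrightarrow> first_visit \<alpha> \<le> entry finish"
proof -
  assume "\<alpha> \<in> reached"
  then obtain k where "k \<le> finish" "short k \<in> target G \<alpha>"
    using all_served_finish[of finish] unfolding served_eq by blast
  then have "first_visit \<alpha> \<le> entry k"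
    by (intro first_visit_le) (simp add: entry_state)
  also have "\<dots> \<le> entry finish"
    using \<open>k \<le> finish\<close> by (rule entry_mono) simp
  finally show ?thesis .
qed

lemma first_visit_eq_horizon:
  assumes "\<alpha> \<in> reached - served (finish - 1)" 
  shows "first_visit \<alpha> = horizon"
proof -
  have "0 < finish"
    using assms all_served_finish[of 0] by (cases finish) auto
  then have "entry finish = Suc (jump (finish - 1))"
    by (cases finish) (simp_all add: entry_def)
  then have "entry finish \<le> first_visit \<alpha>"
    using jump_less_first_visit[OF assms] by simp
  moreover have "horizon \<le> entry finish"
    unfolding horizon_def using first_visit_le_entry_finish by (simp add: Max_le_iff)
  moreover have "first_visit \<alpha> \<le> horizon"
    using assms by (simp add: first_visit_le_horizon)
  ultimately show ?thesis
    by linarith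
qed

text \<open>If \<open>finish = 0\<close>, the truncated \<open>finish - 1\<close> is \<open>0\<close> as well, and so is \<open>settle\<close>.\<close>

definition settle :: nat where
  "settle = (LEAST n. served n = served (finish - 1))"

lemma settle_le: "settle \<le> finish - 1"
  unfolding settle_def by (rule Least_le) (rule refl)

lemma served_settled: "settle \<le> n \<Longrightarrow> n < finish \<Longrightarrow> served n = served (finish - 1)"
proof -
  assume "settle \<le> n" "n < finish"
  have "served settle = served (finish - 1)"
    unfolding settle_def by (rule LeastI[of _ "finish - 1"]) (rule refl)
  moreover have "served settle \<subseteq> served n" "served n \<subseteq> served (finish - 1)"
    using \<open>settle \<le> n\<close> \<open>n < finish\<close> by (simp_all add: served_mono)
  ultimately show ?thesis
    by blast
qed

lemma served_before_settle: "n < settle \<Longrightarrow> served n \<subset> served (finish - 1)"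
proof -
  assume "n < settle"
  then have "served n \<noteq> served (finish - 1)"
    unfolding settle_def by (rule not_less_Least)
  moreover have "served n \<subseteq> served (finish - 1)"
    using \<open>n < settle\<close> settle_le by (intro served_mono) simp
  ultimately show ?thesis
    by blast
qed

lemma deadline_settled: "settle \<le> n \<Longrightarrow> deadline (served n) = horizon"
proof (cases "n < finish")
  case True
  assume "settle \<le> n"
  then have "served n = served (finish - 1)"
    using True by (rule served_settled)
  then have "insert horizon (first_visit ` (reached - served n)) = {horizon}"
    using first_visit_eq_horizon by auto
  then show ?thesis
    unfolding deadline_def by (simp only: Min_singleton)
next
  case False
  then have "reached - served n = {}"
    using all_served_finish[of n] by simp
  then show ?thesis
    unfolding deadline_def by (simp only: image_empty Min_singleton)
qed

lemma short_settled_step: "settle \<le> n \<Longrightarrow> short (Suc n) = \<rho> (Suc (last_occ horizon (short n)))"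
  using short_edge(2)[of n] by (simp add: jump_def deadline_settled)

lemma short_distinct:
  assumes "n < n'" and "n' \<le> finish" and "entry n' \<le> deadline (served n)"
  shows "short n \<noteq> short n'"
proof
  assume eq: "short n = short n'"
  obtain m where m: "n' = Suc m"
    using assms(1) by (cases n') auto
  have "jump n \<le> jump m"
    using assms m unfinished_before_finish[of m] by (intro jump_mono) auto
  moreover have "entry n' \<le> jump n"
    using assms unfinished_before_finish[of n] eq entry_state[of n'] by (intro jump_bounds(3)) auto
  ultimately show False
    using m by (simp add: entry_def)
qed

lemma inj_on_short_settled: "inj_on short {settle..finish}"
proof (rule linorder_inj_onI')
  fix n n'
  assume "n \<in> {settle..finish}" "n' \<in> {settle..finish}" "n < n'"
  then show "short n \<noteq> short n'"
    using entry_le_horizon[of n'] deadline_settled[of n] by (intro short_distinct) auto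
qed

lemma card_served_before_settle:
  assumes "n < settle"
  shows "card (served n) < card (UNIV :: 'p set) - 1"
proof -
  have "finish - 1 < finish"
    using assms settle_le by simp
  then have "served (finish - 1) \<subset> reached"
    using unfinished_before_finish served_subset_reached by blast
  then have "card (served (finish - 1)) < card reached"
    by (simp add: psubset_card_mono)
  moreover have "card (served n) < card (served (finish - 1))"
    using served_before_settle[OF assms] by (simp add: psubset_card_mono)
  moreover have "card reached \<le> card (UNIV :: 'p set)"
    by (simp add: card_mono)
  ultimately show ?thesis
    by linarith
qed

lemma inj_on_card_served_short: "inj_on (\<lambda>n. (card (served n), short n)) {..<settle}"
proof (rule linorder_inj_onI')
  fix n n'
  assume "n \<in> {..<settle}" "n' \<in> {..<settle}" "n < n'"
  then have "n' < finish"
    using settle_le by simp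
  show "(card (served n), short n) \<noteq> (card (served n'), short n')"
  proof
    assume eq: "(card (served n), short n) = (card (served n'), short n')"
    then have "served n = served n'"
      using served_mono[of n n'] \<open>n < n'\<close> by (simp add: card_subset_eq)
    moreover have "entry n' \<le> deadline (served n')"
      using jump_bounds(1,2) unfinished_before_finish[OF \<open>n' < finish\<close>] by fastforce
    ultimately have "short n \<noteq> short n'"
      using \<open>n < n'\<close> \<open>n' < finish\<close> by (intro short_distinct) auto
    then show False
      using eq by simp
  qed
qed

lemma settle_bound: "settle \<le> (card (UNIV :: 'p set) - 1) * card (UNIV :: 'v set)"
proof -
  have "(\<lambda>n. (card (served n), short n)) ` {..<settle} \<subseteq> {..<card (UNIV :: 'p set) - 1} \<times> UNIV"
    using card_served_before_settle by auto
  then have "card {..<settle} \<le> card ({..<card (UNIV :: 'p set) - 1} \<times> (UNIV :: 'v set))"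
    using inj_on_card_served_short by (intro card_inj_on_le) auto
  then show ?thesis
    by (simp add: card_cartesian_product)
qed

lemma short_lasso:
  "\<exists>\<mu> \<eta>. lasso short \<mu> \<eta> \<and> finish < length \<mu> \<and> length \<mu> \<le> card (UNIV :: 'p set) * card (UNIV :: 'v set)"
proof -
  define s where "s j = short (settle + j)" for j
  have step: "s (Suc j) = \<rho> (Suc (last_occ horizon (s j)))" for j
    unfolding s_def by (simp add: short_settled_step)
  have inj: "inj_on s {..finish - settle}"
    using inj_on_short_settled unfolding s_def by (auto intro!: inj_onI dest: inj_onD)
  obtain \<mu> \<eta> where \<mu>: "lasso s \<mu> \<eta>" "finish - settle < length \<mu>" "length \<mu> \<le> card (UNIV :: 'v set)"
    using lasso_of_iterate[of s "\<lambda>v. \<rho> (Suc (last_occ horizon v))", OF step inj] by blast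
  have "lasso short (map short [0..<settle] @ \<mu>) \<eta>"
    using \<mu>(1) unfolding s_def by (rule lasso_prepend)
  moreover have "finish < length (map short [0..<settle] @ \<mu>)"
    using \<mu>(2) settle_le by simp
  moreover have "length (map short [0..<settle] @ \<mu>) \<le> card (UNIV :: 'p set) * card (UNIV :: 'v set)"
  proof -
    have "0 < card (UNIV :: 'p set)"
      by (simp add: finite_UNIV_card_ge_0)
    then have "(card (UNIV :: 'p set) - 1) * card (UNIV :: 'v set) + card (UNIV :: 'v set) =
        card (UNIV :: 'p set) * card (UNIV :: 'v set)"
      by (cases "card (UNIV :: 'p set)") simp_all
    then show ?thesis
      using settle_bound \<mu>(3) by simp
  qed
  ultimately show ?thesis
    by blast
qed

lemma short_visit_by_finish: "short n \<in> target G \<alpha> \<Longrightarrow> \<exists>k\<le>finish. short k \<in> target G \<alpha>"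
proof -
  assume "short n \<in> target G \<alpha>"
  then have "\<alpha> \<in> reached"
    unfolding reached_def by (intro CollectI exI[of _ "entry n"]) (simp add: entry_state)
  then show ?thesis
    using all_served_finish[of finish] unfolding served_eq by blast
qed

end

theorem corollary1:
  fixes G :: "('p::finite, 'v::finite, 'a) cgame" and c :: "'p \<Rightarrow> enat"
  assumes "wf_game G"
    and "c \<in> NE_PO G"
  shows "\<exists>P \<mu> \<eta>. is_NE G P \<and> cost G P = c \<and>
           lasso (outcome G P) \<mu> \<eta> \<and>
           length \<mu> - 1 \<le> card (UNIV :: 'p set) * card (UNIV :: 'v set) \<and>
           (\<forall>\<alpha> \<in> winners G P. set \<mu> \<inter> target G \<alpha> \<noteq> {})"
proof -
  obtain P where NE: "is_NE G P" and cost_P: "cost G P = c"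
    and optimal: "\<And>d. d \<in> NE_costs G \<Longrightarrow> d \<le> c \<Longrightarrow> d = c"
    using assms(2) unfolding NE_PO_def NE_costs_def by blast
  interpret shortcut_construction G "outcome G P" .
  interpret NE_shortcut G P jump short
    using NE short_is_shortcut by unfold_locales
  have "cost G shortcut_profile = c"
    using optimal shortcut_profile_NE cost_shortcut_profile_le cost_P unfolding NE_costs_def by blast
  moreover obtain \<mu> \<eta> where lasso: "lasso short \<mu> \<eta>" and "finish < length \<mu>"
    and "length \<mu> \<le> card (UNIV :: 'p set) * card (UNIV :: 'v set)"
    using short_lasso by blast
  moreover have "set \<mu> \<inter> target G \<alpha> \<noteq> {}" if win: "\<alpha> \<in> winners G shortcut_profile" for \<alpha>
  proof -
    obtain k where "k \<le> finish" "short k \<in> target G \<alpha>"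
      using win short_visit_by_finish unfolding winners_def outcome_shortcut_profile by blast
    then show ?thesis
      using lasso_prefix_mem[OF lasso, of k] \<open>finish < length \<mu>\<close> by auto
  qed
  ultimately show ?thesis
    using shortcut_profile_NE by (intro exI[of _ shortcut_profile]) (auto simp: outcome_shortcut_profile)
qed

end
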